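(* Let $X$ and $Y$ be finite sets with $|Y| = n$, let $I = X \cap Y$, and let $p \in [1/2, 1]$. Define two random variables as follows. (1) (Mechanism $\mathcal M'_Y$.) Sample $s \sim \mathrm{Bin}(n, 2(1-p))$; choose $T$ uniformly at random among all subsets of $Y$ of cardinality $s$; independently for each $y \in I \cap T$ flip a fair coin $c_y \sim \mathrm{Ber}(1/2)$; set $Z' = |I \setminus T| + \sum_{y \in I \cap T} c_y$. (2) (Mechanism $\mathcal M''_Y$.) Sample $s_1 \sim \mathrm{Bin}(|I|, 2(1-p))$; choose $T_1$ uniformly at random among all subsets of $I$ of cardinality $s_1$; independently for each $y \in T_1$ flip a fair coin $c_y \sim \mathrm{Ber}(1/2)$; set $Z'' = |I \setminus T_1| + \sum_{y \in T_1} c_y$. Then $\Pr[Z' = z] = \Pr[Z'' = z]$ for all integers $z \ge 0$.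
   Context: $\mathrm{Ber}(r)$ denotes a Bernoulli random variable with success probability $r$, and $\mathrm{Bin}(m, r)$ a binomial random variable with $m$ trials and success probability $r$. All random choices are independent unless stated otherwise. *)

theory Defs
  imports "HOL-Probability.Probability"
begin

definition mech1 :: "'a set \<Rightarrow> 'a set \<Rightarrow> real \<Rightarrow> nat pmf" where
  "mech1 X Y p = do {
     s \<leftarrow> binomial_pmf (card Y) (2 * (1 - p));
     T \<leftarrow> pmf_of_set {T. T \<subseteq> Y \<and> card T = s};
     c \<leftarrow> Pi_pmf ((X \<inter> Y) \<inter> T) False (\<lambda>_. bernoulli_pmf (1/2));
     return_pmf (card ((X \<inter> Y) - T) + card {y \<in> (X \<inter> Y) \<inter> T. c y})
   }"

definition mech2 :: "'a set \<Rightarrow> 'a set \<Rightarrow> real \<Rightarrow> nat pmf" where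
  "mech2 X Y p = do {
     s1 \<leftarrow> binomial_pmf (card (X \<inter> Y)) (2 * (1 - p));
     T1 \<leftarrow> pmf_of_set {T. T \<subseteq> X \<inter> Y \<and> card T = s1};
     c \<leftarrow> Pi_pmf T1 False (\<lambda>_. bernoulli_pmf (1/2));
     return_pmf (card ((X \<inter> Y) - T1) + card {y \<in> T1. c y})
   }"

end

theory Submission
  imports Defs
begin

text \<open>Drawing a size \<open>s \<sim> Bin(|Y|, q)\<close> and then a uniform \<open>s\<close>-subset of \<open>Y\<close> is the same as
  putting every element of \<open>Y\<close> into the subset independently with probability \<open>q\<close>: both give
  a set \<open>T \<subseteq> Y\<close> probability \<open>q^|T| (1-q)^(|Y|-|T|)\<close>. Restricting such a random subset of \<open>Y\<close>
  to \<open>I \<subseteq> Y\<close> yields a random subset of \<open>I\<close> with the same inclusion probability. Since both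
  mechanisms only look at \<open>I \<inter> T\<close>, they coincide with \<open>q = 2(1-p)\<close>.\<close>

lemma pmf_map_inj_on:
  assumes "inj_on f S" "set_pmf M \<subseteq> S" "x \<in> S"
  shows "pmf (map_pmf f M) (f x) = pmf M x"
proof (cases "x \<in> set_pmf M")
  case True
  then show ?thesis using assms by (intro pmf_map_inj) (auto intro: inj_on_subset)
next
  case False
  then have "f x \<notin> f ` set_pmf M" using assms by (auto dest: inj_onD)
  then show ?thesis using False by (simp add: pmf_map_outside set_pmf_eq)
qed

definition random_subset_pmf :: "'a set \<Rightarrow> real \<Rightarrow> 'a set pmf" where
  "random_subset_pmf Y q = map_pmf (\<lambda>f. {y\<in>Y. f y}) (Pi_pmf Y False (\<lambda>_. bernoulli_pmf q))"

lemma pmf_random_subset: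
  assumes Y: "finite Y" and "T \<subseteq> Y" and q: "0 \<le> q" "q \<le> 1"
  shows "pmf (random_subset_pmf Y q) T = q ^ card T * (1 - q) ^ (card Y - card T)"
proof -
  let ?S = "{f. \<forall>x. x \<notin> Y \<longrightarrow> f x = False}"
  have inj: "inj_on (\<lambda>f. {y\<in>Y. f y}) ?S"
    by (auto simp: inj_on_def fun_eq_iff set_eq_iff)
  have "pmf (random_subset_pmf Y q) T
      = pmf (random_subset_pmf Y q) ((\<lambda>f. {y\<in>Y. f y}) (\<lambda>y. y \<in> T))"
    using \<open>T \<subseteq> Y\<close> by (simp add: Int_absorb1 flip: Int_def)
  also have "\<dots> = pmf (Pi_pmf Y False (\<lambda>_. bernoulli_pmf q)) (\<lambda>y. y \<in> T)"
    unfolding random_subset_pmf_def using \<open>T \<subseteq> Y\<close>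
    by (intro pmf_map_inj_on[OF inj set_Pi_pmf_subset[OF Y]]) auto
  also have "\<dots> = (\<Prod>y\<in>Y. if y \<in> T then q else 1 - q)"
    using \<open>T \<subseteq> Y\<close> q by (auto simp: pmf_Pi[OF Y] intro!: prod.cong)
  also have "\<dots> = q ^ card T * (1 - q) ^ (card Y - card T)"
    using \<open>T \<subseteq> Y\<close> Y
    by (simp add: prod.If_cases Int_absorb1 card_Diff_subset finite_subset flip: Diff_eq)
  finally show ?thesis .
qed

lemma set_random_subset: "set_pmf (random_subset_pmf Y q) \<subseteq> Pow Y"
  by (auto simp: random_subset_pmf_def)

lemma binomial_bind_subsets_of_card:
  assumes Y: "finite Y" and q: "0 \<le> q" "q \<le> 1"
  shows "binomial_pmf (card Y) q \<bind> (\<lambda>s. pmf_of_set {T. T \<subseteq> Y \<and> card T = s})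
       = random_subset_pmf Y q"
proof (rule pmf_eqI)
  fix T
  let ?n = "card Y"
  let ?S = "\<lambda>s. {T. T \<subseteq> Y \<and> card T = s}"
  let ?w = "\<lambda>s. q ^ s * (1 - q) ^ (?n - s)"
  have "pmf (binomial_pmf ?n q) s * pmf (pmf_of_set (?S s)) T
      = (if T \<in> ?S s then ?w s else 0)" if "s \<le> ?n" for s
  proof -
    have "?S s \<noteq> {}"
      using obtain_subset_with_card_n[OF \<open>s \<le> ?n\<close>] by blast
    moreover have "finite (?S s)"
      using Y by (auto intro: finite_subset[of _ "Pow Y"])
    ultimately show ?thesis
      using q that by (simp add: n_subsets[OF Y] indicator_def)
  qed
  then have "pmf (binomial_pmf ?n q \<bind> (\<lambda>s. pmf_of_set (?S s))) T
      = (\<Sum>s\<le>?n. if T \<in> ?S s then ?w s else 0)"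
    using q unfolding pmf_bind
    by (subst integral_measure_pmf[of "{..?n}"]) (auto simp: set_pmf_binomial_eq split: if_splits)
  also have "\<dots> = pmf (random_subset_pmf Y q) T"
  proof (cases "T \<subseteq> Y")
    case True
    then have "card T \<le> ?n" using Y by (simp add: card_mono)
    with True show ?thesis
      using pmf_random_subset[OF Y True q] by (simp add: sum.delta' eq_commute[of "card T"])
  next
    case False
    then show ?thesis using set_random_subset by (auto simp: set_pmf_eq)
  qed
  finally show "pmf (binomial_pmf ?n q \<bind> (\<lambda>s. pmf_of_set (?S s))) T
      = pmf (random_subset_pmf Y q) T" .
qed

lemma map_Int_random_subset:
  assumes "finite Y" "I \<subseteq> Y"
  shows "map_pmf (\<lambda>T. I \<inter> T) (random_subset_pmf Y q) = random_subset_pmf I q"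
  unfolding random_subset_pmf_def Pi_pmf_subset[OF assms] map_pmf_comp
  using assms(2) by (intro map_pmf_cong) auto

theorem lemma3:
  fixes X Y :: "'a set" and p :: real and n :: nat
  assumes "finite X" and "finite Y" and "card Y = n"
    and "1/2 \<le> p" and "p \<le> 1"
  shows "\<forall>z::nat. pmf (mech1 X Y p) z = pmf (mech2 X Y p) z"
proof -
  define q where "q = 2 * (1 - p)"
  define I where "I = X \<inter> Y"
  have q: "0 \<le> q" "q \<le> 1" using assms unfolding q_def by auto
  have "I \<subseteq> Y" "finite I" using \<open>finite Y\<close> unfolding I_def by auto
  define release where "release = (\<lambda>U. Pi_pmf U False (\<lambda>_. bernoulli_pmf (1/2)) \<bind>
      (\<lambda>c. return_pmf (card (I - U) + card {y\<in>U. c y})))"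
  have "mech1 X Y p = binomial_pmf (card Y) q \<bind> (\<lambda>s. pmf_of_set {T. T \<subseteq> Y \<and> card T = s})
      \<bind> (\<lambda>T. release (I \<inter> T))"
    unfolding mech1_def bind_assoc_pmf release_def q_def I_def by (simp add: Diff_Int)
  also have "\<dots> = map_pmf (\<lambda>T. I \<inter> T) (random_subset_pmf Y q) \<bind> release"
    by (simp add: binomial_bind_subsets_of_card[OF \<open>finite Y\<close> q] bind_map_pmf)
  also have "\<dots> = binomial_pmf (card I) q \<bind> (\<lambda>s. pmf_of_set {T. T \<subseteq> I \<and> card T = s}) \<bind> release"
    by (simp add: map_Int_random_subset[OF \<open>finite Y\<close> \<open>I \<subseteq> Y\<close>]
        binomial_bind_subsets_of_card[OF \<open>finite I\<close> q])
  also have "\<dots> = mech2 X Y p"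
    unfolding mech2_def bind_assoc_pmf release_def q_def I_def by simp
  finally show ?thesis by simp
qed

end
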